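(* Let $\Sigma$ be an alphabet with $|\Sigma|\ge 3$ and $f\colon\Sigma^*\to\Sigma^*$ RCP. Then exactly one of the following holds: ($C_1$) there exists $b\in\Sigma$ such that $f(x)\in b\Sigma^*$ for all $x\in\Sigma^*$; ($C_2$) $f(x)\in x\Sigma^*$ for all $x\in\Sigma^*$; ($C_3$) $f(x)=\varepsilon$ for all $x\in\Sigma^*$.
   Context: $\Sigma^*$ is the free monoid over $\Sigma$ (finite words, concatenation, empty word $\varepsilon$). For a word $w$, $w\Sigma^*$ denotes the set of words having $w$ as a prefix. A function $f\colon(\Sigma^* )^k\to\Sigma^*$ is RCP if for every monoid morphism $\varphi\colon\Sigma^*\to\Sigma^*$ and all $u_1,\ldots,u_k,v_1,\ldots,v_k$ with $\varphi(u_i)=\varphi(v_i)$ for all $i$, we have $\varphi(f(u_1,\ldots,u_k))=\varphi(f(v_1,\ldots,v_k))$. *)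

theory Defs
  imports Main
begin

text \<open>Words over the alphabet 'a are lists. A monoid morphism of the free monoid
  is determined by the images of the letters: it is concat of map h.\<close>

definition is_monoid_morphism :: "('a list \<Rightarrow> 'a list) \<Rightarrow> bool" where
  "is_monoid_morphism \<phi> \<longleftrightarrow> \<phi> [] = [] \<and> (\<forall>u v. \<phi> (u @ v) = \<phi> u @ \<phi> v)"

text \<open>RCP for unary functions (k = 1).\<close>
definition RCP :: "('a list \<Rightarrow> 'a list) \<Rightarrow> bool" where
  "RCP f \<longleftrightarrow> (\<forall>\<phi> u v. is_monoid_morphism \<phi> \<longrightarrow> \<phi> u = \<phi> v \<longrightarrow> \<phi> (f u) = \<phi> (f v))"

end

theory Submission
  imports Defs "HOL-Library.Sublist"
begin

text \<open>RCP makes f commute with three kinds of morphisms: projections onto a set of letters,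
  renaming one letter into another, and substituting a word y for a letter a that does not occur
  in y. Renaming shows that f is empty on all letters as soon as it is empty on one, and that the
  first letter of f [a] is either always a or always the same letter b. Substituting y for a then
  forces f y to begin with y, resp. with b, at least when y avoids a letter; projecting onto
  one or two letters at a time spreads this to all words, a third letter always being available
  for the substitution.\<close>

definition subst_letter :: "'a \<Rightarrow> 'a list \<Rightarrow> 'a list \<Rightarrow> 'a list" where
  "subst_letter a y w = concat (map (\<lambda>z. if z = a then y else [z]) w)"

lemma subst_letter_Nil [simp]: "subst_letter a y [] = []"
  by (simp add: subst_letter_def)

lemma subst_letter_Cons: "subst_letter a y (c # w) = (if c = a then y else [c]) @ subst_letter a y w"
  by (simp add: subst_letter_def)

lemma subst_letter_append: "subst_letter a y (u @ v) = subst_letter a y u @ subst_letter a y v"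
  by (simp add: subst_letter_def)

lemma subst_letter_id: "a \<notin> set w \<Longrightarrow> subst_letter a y w = w"
  by (induction w) (auto simp: subst_letter_Cons)

lemma subst_letter_eq_NilD: "subst_letter a y w = [] \<Longrightarrow> set w \<subseteq> {a}"
  by (induction w) (auto simp: subst_letter_Cons split: if_split_asm)

lemma is_monoid_morphism_subst_letter: "is_monoid_morphism (subst_letter a y)"
  by (simp add: is_monoid_morphism_def subst_letter_def)

lemma is_monoid_morphism_filter: "is_monoid_morphism (filter P)"
  by (simp add: is_monoid_morphism_def)

lemma is_monoid_morphism_map: "is_monoid_morphism (map g)"
  by (simp add: is_monoid_morphism_def)

lemma append_Cons_eq_append_ConsD:
  assumes "p @ a # q = p' @ a' # q'" and "a \<noteq> a'"
  shows "a \<in> set p' \<or> a' \<in> set p"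
  using assms by (auto simp: append_eq_append_conv2 Cons_eq_append_conv append_eq_Cons_conv)

lemma prefix_if_prefix_filter_pairs:
  "(\<And>u v. prefix (filter (\<lambda>z. z = u \<or> z = v) x) (filter (\<lambda>z. z = u \<or> z = v) zs)) \<Longrightarrow> prefix x zs"
proof (induction x arbitrary: zs)
  case Nil
  then show ?case by simp
next
  case (Cons c x)
  obtain e zs' where zs: "zs = e # zs'"
    using Cons.prems[of c c] by (cases zs) auto
  have "e = c"
    using Cons.prems[of c e] zs by (auto split: if_splits)
  have "prefix (filter (\<lambda>z. z = u \<or> z = v) x) (filter (\<lambda>z. z = u \<or> z = v) zs')" for u v
    using Cons.prems[of u v] zs \<open>e = c\<close> by (auto split: if_splits)
  with Cons.IH zs \<open>e = c\<close> show ?case by simp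
qed

lemma third_letter_if_card_UNIV_ge_3:
  assumes "card (UNIV :: 'a set) \<ge> 3"
  shows "\<exists>w::'a. w \<noteq> u \<and> w \<noteq> v"
proof (rule ccontr)
  assume "\<not> ?thesis"
  then have "UNIV = {u, v}" by auto
  then have "card (UNIV :: 'a set) = card {u, v}" by simp
  also have "\<dots> \<le> 2" by (simp add: card_insert_if)
  finally show False using assms by simp
qed

text \<open>The hypothesis is what renaming a into c does to the first letters h a of f [a] and
  h c of f [c].\<close>

lemma identity_or_constant_if_merge_compatible:
  fixes h :: "'a \<Rightarrow> 'a"
  assumes merge: "\<And>a c. (if h a = a then c else h a) = (if h c = a then c else h c)"
    and third: "\<And>u v. \<exists>w::'a. w \<noteq> u \<and> w \<noteq> v"
  shows "(\<forall>a. h a = a) \<or> (\<exists>b. \<forall>a. h a = b)"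
proof (rule disjCI)
  assume "\<not> (\<exists>b. \<forall>a. h a = b)"
  show "\<forall>a. h a = a"
  proof (rule ccontr)
    assume "\<not> (\<forall>a. h a = a)"
    then obtain a0 where a0: "h a0 \<noteq> a0" by blast
    define b where "b = h a0"
    have off_b: "h c = b" if "c \<noteq> b" for c
      using merge[of a0 c] a0 that unfolding b_def by (auto split: if_splits)
    obtain e where e: "e \<noteq> a0" "e \<noteq> b" using third[of a0 b] by blast
    have "h b = b \<or> h b = e"
      using merge[of b e] off_b[OF e(2)] by (auto split: if_splits)
    moreover have "h b = b \<or> h b = a0"
      using merge[of a0 b] a0 unfolding b_def by (auto split: if_splits)
    ultimately have "h b = b" using e by auto
    with off_b \<open>\<not> (\<exists>b. \<forall>a. h a = b)\<close> show False by metis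
  qed
qed

locale rcp_function =
  fixes f :: "'a list \<Rightarrow> 'a list"
  assumes rcp: "RCP f"
begin

lemma rcp_eq: "is_monoid_morphism \<phi> \<Longrightarrow> \<phi> u = \<phi> v \<Longrightarrow> \<phi> (f u) = \<phi> (f v)"
  using rcp unfolding RCP_def by blast

lemma subst_letter_single:
  "a \<notin> set y \<Longrightarrow> subst_letter a y (f [a]) = subst_letter a y (f y)"
  by (rule rcp_eq[OF is_monoid_morphism_subst_letter]) (simp add: subst_letter_id subst_letter_Cons)

lemma filter_commute: "filter P (f x) = filter P (f (filter P x))"
  by (rule rcp_eq[OF is_monoid_morphism_filter]) simp

lemma map_merge_single:
  "map (\<lambda>z. if z = a then c else z) (f [a]) = map (\<lambda>z. if z = a then c else z) (f [c])"
  by (rule rcp_eq[OF is_monoid_morphism_map]) simp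

end

locale rcp_function_three_letters = rcp_function f for f :: "'a list \<Rightarrow> 'a list" +
  assumes third_letter: "\<And>u v. \<exists>w::'a. w \<noteq> u \<and> w \<noteq> v"
begin

lemma Nil_if_Nil_on_letter:
  assumes "f [a0] = []"
  shows "f x = []"
proof (rule ccontr)
  have single: "f [a] = []" for a
    using arg_cong[OF map_merge_single[of a a0], of length] assms by simp
  assume "f x \<noteq> []"
  then obtain z where z: "z \<in> set (f x)" by (cases "f x") auto
  define y where "y = filter (\<lambda>w. w = z) x"
  obtain a where "a \<noteq> z" using third_letter[of z z] by blast
  then have "a \<notin> set y" by (simp add: y_def)
  then have "subst_letter a y (f y) = []" using subst_letter_single single by simp
  then have "set (f y) \<subseteq> {a}" by (rule subst_letter_eq_NilD)
  moreover have "z \<in> set (f y)"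
    using z filter_commute[of "\<lambda>w. w = z" x] unfolding y_def
    by (metis (mono_tags, lifting) mem_Collect_eq set_filter)
  ultimately show False using \<open>a \<noteq> z\<close> by auto
qed

lemma head_identity_or_constant:
  assumes ne: "\<And>a. f [a] \<noteq> []"
  shows "(\<forall>a. hd (f [a]) = a) \<or> (\<exists>b. \<forall>a. hd (f [a]) = b)"
proof (rule identity_or_constant_if_merge_compatible[OF _ third_letter])
  fix a c
  show "(if hd (f [a]) = a then c else hd (f [a])) = (if hd (f [c]) = a then c else hd (f [c]))"
    using arg_cong[OF map_merge_single[of a c], of hd] by (simp add: hd_map ne)
qed

lemma head_in_avoided_pair:
  assumes hb: "\<forall>a. \<exists>s. f [a] = b # s" and "a \<notin> set y" "a \<noteq> b"
  shows "\<exists>c s. f y = c # s \<and> (c = a \<or> c = b)"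
proof -
  obtain s where "f [a] = b # s" using hb by blast
  with subst_letter_single[OF \<open>a \<notin> set y\<close>] \<open>a \<noteq> b\<close>
  have "subst_letter a y (f y) = b # subst_letter a y s" by (simp add: subst_letter_Cons)
  then show ?thesis
    by (cases "f y") (auto simp: subst_letter_Cons split: if_splits)
qed

lemma constant_head_if_avoids:
  assumes hb: "\<forall>a. \<exists>s. f [a] = b # s" and "a \<notin> set y" "a \<noteq> b"
  shows "\<exists>s. f y = b # s"
proof -
  define P where "P = (\<lambda>z. z = a \<or> z = b)"
  obtain a' where a': "a' \<noteq> a" "a' \<noteq> b" using third_letter[of a b] by blast
  have "a \<notin> set (filter P y)" "a' \<notin> set (filter P y)"
    using \<open>a \<notin> set y\<close> a' by (auto simp: P_def)
  with head_in_avoided_pair[OF hb] \<open>a \<noteq> b\<close> a'(2)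
  obtain s where "f (filter P y) = b # s"
    by (metis \<open>a' \<noteq> a\<close> list.inject)
  then have "filter P (f y) = b # filter P s"
    using filter_commute[of P y] by (simp add: P_def)
  moreover obtain c t where "f y = c # t" "c = a \<or> c = b"
    using head_in_avoided_pair[OF assms] by blast
  ultimately show ?thesis by (auto simp: P_def)
qed

lemma constant_head:
  assumes hb: "\<forall>a. \<exists>s. f [a] = b # s"
  shows "\<exists>s. f x = b # s"
proof -
  define P where "P = (\<lambda>z. z = b \<or> z = hd (f x))"
  obtain a where a: "a \<noteq> b" "a \<noteq> hd (f x)" using third_letter[of b "hd (f x)"] by blast
  then have "a \<notin> set (filter P x)" by (auto simp: P_def)
  from constant_head_if_avoids[OF hb this \<open>a \<noteq> b\<close>] obtain s where "f (filter P x) = b # s" ..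
  then have "filter P (f x) = b # filter P s"
    using filter_commute[of P x] by (simp add: P_def)
  then show ?thesis by (cases "f x") (auto simp: P_def split: if_splits)
qed

text \<open>Substituting y for a in f [a] = a # s yields y @ \<dots>; if a occurs in f y, the part of f y
  before its first occurrence is comparable with y.\<close>

lemma prefix_or_letter_before_end:
  assumes ha: "\<forall>a. \<exists>s. f [a] = a # s" and a: "a \<notin> set y"
  shows "prefix y (f y) \<or> (\<exists>p q. f y = p @ a # q \<and> strict_prefix p y)"
proof -
  obtain s where "f [a] = a # s" using ha by blast
  with subst_letter_single[OF a]
  have eq: "subst_letter a y (f y) = y @ subst_letter a y s" by (simp add: subst_letter_Cons)
  show ?thesis
  proof (cases "a \<in> set (f y)")
    case False
    then show ?thesis using eq by (simp add: subst_letter_id)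
  next
    case True
    then obtain p q where pq: "f y = p @ a # q" "a \<notin> set p" by (metis split_list_first)
    with eq have "p @ y @ subst_letter a y q = y @ subst_letter a y s"
      by (simp add: subst_letter_append subst_letter_Cons subst_letter_id)
    then have "prefix y p \<or> prefix p y"
      by (metis prefix_same_cases prefixI)
    then show ?thesis
      using pq(1) by (metis prefixI prefix_order.order_trans prefix_order.le_neq_trans)
  qed
qed

lemma prefix_if_avoids_two:
  assumes ha: "\<forall>a. \<exists>s. f [a] = a # s" and "a \<notin> set y" "a' \<notin> set y" "a \<noteq> a'"
  shows "prefix y (f y)"
proof (rule ccontr)
  assume "\<not> prefix y (f y)"
  with prefix_or_letter_before_end[OF ha] assms(2,3)
  obtain p q p' q' where "f y = p @ a # q" "strict_prefix p y" "f y = p' @ a' # q'" "strict_prefix p' y"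
    by meson
  then have "a \<in> set p' \<or> a' \<in> set p" and "set p \<subseteq> set y" "set p' \<subseteq> set y"
    using append_Cons_eq_append_ConsD[of p a q p' a' q'] \<open>a \<noteq> a'\<close>
    by (auto dest!: set_mono_prefix elim: strict_prefixE)
  with assms(2,3) show False by auto
qed

lemma prefix_if_avoids:
  assumes ha: "\<forall>a. \<exists>s. f [a] = a # s" and a: "a \<notin> set y"
  shows "prefix y (f y)"
proof (rule ccontr)
  assume "\<not> prefix y (f y)"
  with prefix_or_letter_before_end[OF ha a] obtain p q d r
    where fy: "f y = p @ a # q" and y: "y = p @ d # r"
    by (metis strict_prefixE')
  have "d \<noteq> a" using a y by auto
  define P where "P = (\<lambda>z. z = a \<or> z = d)"
  obtain a' where a': "a' \<noteq> a" "a' \<noteq> d" using third_letter[of a d] by blast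
  have "a \<notin> set (filter P y)" "a' \<notin> set (filter P y)" using a a' by (auto simp: P_def)
  from prefix_if_avoids_two[OF ha this a'(1)[symmetric]] obtain s
    where "f (filter P y) = filter P y @ s" by (auto elim: prefixE)
  then have "filter P (f y) = filter P y @ filter P s"
    using filter_commute[of P y] by simp
  with fy y \<open>d \<noteq> a\<close> show False by (simp add: P_def)
qed

lemma prefix_everywhere:
  assumes ha: "\<forall>a. \<exists>s. f [a] = a # s"
  shows "prefix x (f x)"
proof (rule prefix_if_prefix_filter_pairs)
  fix u v :: 'a
  define P where "P = (\<lambda>z. z = u \<or> z = v)"
  obtain a where "a \<noteq> u" "a \<noteq> v" using third_letter[of u v] by blast
  then have "a \<notin> set (filter P x)" by (auto simp: P_def)
  from prefix_if_avoids[OF ha this] obtain s where "f (filter P x) = filter P x @ s"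
    by (auto elim: prefixE)
  then have "filter P (f x) = filter P x @ filter P s"
    using filter_commute[of P x] by simp
  then show "prefix (filter P x) (filter P (f x))" by (simp add: P_def)
qed

lemma trichotomy:
  "(\<exists>b. \<forall>x. \<exists>s. f x = b # s) \<or> (\<forall>x. prefix x (f x)) \<or> (\<forall>x. f x = [])"
proof (cases "\<exists>a. f [a] = []")
  case True
  then show ?thesis using Nil_if_Nil_on_letter by blast
next
  case False
  then have ne: "\<And>a. f [a] \<noteq> []" by blast
  then have "\<And>a. f [a] = hd (f [a]) # tl (f [a])" by simp
  with head_identity_or_constant[OF ne] constant_head prefix_everywhere show ?thesis
    by metis
qed

end

theorem mainTheorem10:
  fixes f :: "'a::finite list \<Rightarrow> 'a list"
  assumes "card (UNIV :: 'a set) \<ge> 3"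
    and "RCP f"
  defines "C1 \<equiv> (\<exists>b. \<forall>x. \<exists>s. f x = b # s)"
    and "C2 \<equiv> (\<forall>x. \<exists>s. f x = x @ s)"
    and "C3 \<equiv> (\<forall>x. f x = [])"
  shows "(C1 \<and> \<not> C2 \<and> \<not> C3) \<or> (\<not> C1 \<and> C2 \<and> \<not> C3) \<or> (\<not> C1 \<and> \<not> C2 \<and> C3)"
proof -
  interpret rcp_function_three_letters f
    using assms(2) third_letter_if_card_UNIV_ge_3[OF assms(1)] by unfold_locales auto
  have "C1 \<or> C2 \<or> C3"
    using trichotomy unfolding C1_def C2_def C3_def prefix_def by blast
  moreover have "\<not> (C1 \<and> C2)"
  proof
    assume "C1 \<and> C2"
    then obtain b where "\<forall>x. \<exists>s. f x = b # s" "\<forall>x. \<exists>s. f x = x @ s"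
      unfolding C1_def C2_def by blast
    moreover obtain c where "c \<noteq> b" using third_letter[of b b] by blast
    ultimately show False by (metis append_Cons append_Nil list.inject)
  qed
  moreover have "\<not> (C1 \<and> C3)" and "\<not> (C2 \<and> C3)"
    unfolding C1_def C2_def C3_def by force+
  ultimately show ?thesis by blast
qed

end
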